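(* Let $K$ be an imaginary quadratic field of class number $1$, with ring of integers $\mathcal{O}_K\subset\mathbb{C}$, and let $z\in\mathcal{O}_K$, $z\neq 0$. There is a natural number $n$ such that $z^n$ is a real number if and only if $\arg z$ is a multiple of $\pi/4$ when $K=\mathbb{Q}(\sqrt{-1})$, a multiple of $\pi/6$ when $K=\mathbb{Q}(\sqrt{-3})$, and a multiple of $\pi/2$ otherwise. *)

theory Defs
  imports "HOL-Analysis.Analysis" "HOL-Computational_Algebra.Polynomial" "HOL-Computational_Algebra.Squarefree"
begin

definition quad_field :: "int \<Rightarrow> complex set" where
  "quad_field d = {of_rat a + of_rat b * (\<i> * complex_of_real (sqrt (real_of_int (- d)))) | a b. True}"

definition ring_of_integers :: "int \<Rightarrow> complex set" where
  "ring_of_integers d = {x \<in> quad_field d. algebraic_int x}"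

definition is_ideal_OK :: "int \<Rightarrow> complex set \<Rightarrow> bool" where
  "is_ideal_OK d I \<longleftrightarrow> I \<subseteq> ring_of_integers d \<and> 0 \<in> I \<and>
     (\<forall>x\<in>I. \<forall>y\<in>I. x + y \<in> I) \<and> (\<forall>r\<in>ring_of_integers d. \<forall>x\<in>I. r * x \<in> I)"

definition is_principal_OK :: "int \<Rightarrow> complex set \<Rightarrow> bool" where
  "is_principal_OK d I \<longleftrightarrow> (\<exists>a\<in>ring_of_integers d. I = {a * r | r. r \<in> ring_of_integers d})"

definition class_number_one :: "int \<Rightarrow> bool" where
  "class_number_one d \<longleftrightarrow> (\<forall>I. is_ideal_OK d I \<longrightarrow> is_principal_OK d I)"

end

theory Submission
  imports Defs
begin

text \<open>
  Write \<open>\<theta> = Arg z\<close>; then \<open>z^n\<close> is real exactly when \<open>sin (n \<theta>) = 0\<close>. In that case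
  \<open>2 cos (2\<theta>)\<close> is rational, because \<open>z \<in> K\<close>, and an algebraic integer, because it is a root
  of the monic integer polynomial \<open>V\<^sub>n(x) - 2\<close>, where \<open>V\<^sub>n\<close> is the Vieta--Lucas polynomial with
  \<open>V\<^sub>n(2 cos t) = 2 cos (n t)\<close>. Hence \<open>2 cos (2\<theta>) \<in> {-2,...,2}\<close>. The values \<open>\<plusminus>2\<close> give
  \<open>\<theta> \<in> (\<pi>/2)\<int>\<close>; writing \<open>z = a + b\<surd>-D\<close>, the value \<open>0\<close> forces \<open>a\<^sup>2 = D b\<^sup>2\<close> and the values \<open>\<plusminus>1\<close>
  force \<open>a\<^sup>2 = 3 D b\<^sup>2\<close> or \<open>3 a\<^sup>2 = D b\<^sup>2\<close>, which for squarefree \<open>D\<close> leave only \<open>D = 1\<close>, where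
  \<open>\<theta> \<in> (\<pi>/4)\<int>\<close>, and \<open>D = 3\<close>, where \<open>\<theta> \<in> (\<pi>/6)\<int>\<close>.
\<close>

fun vieta_lucas :: "nat \<Rightarrow> real poly" where
  "vieta_lucas 0 = [:2:]"
| "vieta_lucas (Suc 0) = [:0, 1:]"
| "vieta_lucas (Suc (Suc n)) = pCons 0 (vieta_lucas (Suc n)) - vieta_lucas n"

lemma poly_vieta_lucas_two_cos: "poly (vieta_lucas n) (2 * cos x) = 2 * cos (real n * x)"
proof (induction n rule: vieta_lucas.induct)
  case (3 n)
  have "2 * cos (real (Suc (Suc n)) * x) = 2 * cos x * (2 * cos (real (Suc n) * x)) - 2 * cos (real n * x)"
    using cos_add[of "real (Suc n) * x" x] cos_diff[of "real (Suc n) * x" x]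
    by (simp add: algebra_simps)
  with 3 show ?case by simp
qed simp_all

lemma coeff_vieta_lucas_in_Ints: "coeff (vieta_lucas n) k \<in> \<int>"
  by (induction n arbitrary: k rule: vieta_lucas.induct) (auto simp: coeff_pCons split: nat.split)

lemma coeff_vieta_lucas_top:
  "(\<forall>k>n. coeff (vieta_lucas n) k = 0) \<and> coeff (vieta_lucas n) n = (if n = 0 then 2 else 1)"
  by (induction n rule: vieta_lucas.induct) (auto simp: coeff_pCons split: nat.split)

lemma algebraic_int_two_cos:
  assumes "n > 0" and "cos (real n * x) = 1"
  shows "algebraic_int (2 * cos x)"
proof -
  define p where "p = vieta_lucas n - [:2:]"
  have coeff_p: "coeff p k = coeff (vieta_lucas n) k" if "k > 0" for k
    using that by (simp add: p_def coeff_pCons split: nat.split)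
  have "coeff p n = 1" "\<forall>k>n. coeff p k = 0"
    using coeff_vieta_lucas_top[of n] coeff_p assms(1) by auto
  then have "lead_coeff p = 1"
    using degree_le le_degree[of p n] by (metis antisym one_neq_zero)
  moreover have "\<forall>i. coeff p i \<in> \<int>"
    using coeff_vieta_lucas_in_Ints by (simp add: p_def coeff_pCons split: nat.split)
  moreover have "poly p (2 * cos x) = 0"
    using poly_vieta_lucas_two_cos[of n x] assms(2) by (simp add: p_def)
  ultimately show ?thesis by (intro algebraic_int.intros)
qed

lemma two_cos_root_of_unity_rational:
  assumes "n > 0" and "cos (real n * x) = 1" and "2 * cos x \<in> \<rat>"
  obtains k :: int where "2 * cos x = of_int k" and "\<bar>k\<bar> \<le> 2"
proof -
  have "2 * cos x \<in> \<int>"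
    using algebraic_int_two_cos[OF assms(1,2)] assms(3) rational_algebraic_int_is_int by blast
  then obtain k :: int where k: "2 * cos x = of_int k" by (auto elim: Ints_cases)
  moreover have "\<bar>2 * cos x\<bar> \<le> 2" unfolding abs_mult using abs_cos_le_one[of x] by simp
  ultimately show ?thesis using that by simp
qed

lemma two_cos_in_Ints_cases:
  fixes y :: real
  assumes "2 * cos y = of_int k" and "\<bar>k\<bar> \<le> 2"
  obtains "\<bar>k\<bar> = 2" and "sin y = 0" | "k = 0" and "sin (2 * y) = 0" | "\<bar>k\<bar> = 1" and "sin (3 * y) = 0"
proof -
  consider "\<bar>k\<bar> = 2" | "k = 0" | "\<bar>k\<bar> = 1" using assms(2) by linarith
  then show thesis
  proof cases
    case 1
    then have "k = 2 \<or> k = -2" by arith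
    then have "(cos y)^2 = 1" using assms(1) by auto
    then show thesis using that(1)[OF 1] sin_cos_squared_add[of y] by simp
  next
    case 2
    then show thesis using that(2) assms(1) by (simp add: sin_double)
  next
    case 3
    have cos: "cos y = of_int k / 2" using assms(1) by simp
    have "k = 1 \<or> k = -1" using 3 by arith
    then have "(cos (3 * y))^2 = 1"
      unfolding cos_treble_cos cos by (auto simp: power3_eq_cube power2_eq_square)
    then show thesis using that(3)[OF 3] sin_cos_squared_add[of "3 * y"] by simp
  qed
qed

lemma sin_mult_eq_0_iff_multiple:
  assumes "m > 0"
  shows "sin (real m * x) = 0 \<longleftrightarrow> (\<exists>k::int. x = of_int k * (pi / real m))"
proof -
  have "real m * x = of_int k * pi \<longleftrightarrow> x = of_int k * (pi / real m)" for k :: int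
    using assms by (auto simp: field_simps)
  then show ?thesis by (simp add: sin_zero_iff_int2)
qed

lemma sin_mult_eq_0_dvd:
  assumes "sin (real m * x) = 0" and "m dvd n"
  shows "sin (real n * x) = 0"
proof -
  obtain i :: int where "real m * x = of_int i * pi" using assms(1) sin_zero_iff_int2 by blast
  moreover obtain j where "n = m * j" using assms(2) by blast
  ultimately have "real n * x = of_int (i * int j) * pi" by (simp add: algebra_simps)
  then show ?thesis using sin_zero_iff_int2 by blast
qed

lemma complex_power_in_Reals_iff:
  fixes z :: complex
  assumes "z \<noteq> 0"
  shows "z ^ n \<in> \<real> \<longleftrightarrow> sin (real n * Arg z) = 0"
proof -
  have "z ^ n = rcis (cmod z ^ n) (real n * Arg z)"
    by (metis DeMoivre2 rcis_cmod_Arg)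
  then have "Im (z ^ n) = cmod z ^ n * sin (real n * Arg z)" by simp
  with assms show ?thesis by (simp add: complex_is_Real_iff)
qed

lemma cos_double_Arg:
  fixes z :: complex
  assumes "z \<noteq> 0"
  shows "cos (2 * Arg z) = ((Re z)^2 - (Im z)^2) / (cmod z)^2"
  using assms
  by (simp add: cos_double cos_Arg sin_Arg power_divide diff_divide_distrib del: norm_eq_zero)

lemma of_real_of_rat: "of_real (of_rat q) = (of_rat q :: 'a :: real_field)"
  by (induction q) (simp add: of_rat_rat)

lemma Re_of_rat [simp]: "Re (of_rat q) = of_rat q"
  and Im_of_rat [simp]: "Im (of_rat q) = 0"
  by (metis of_real_of_rat Re_complex_of_real Im_complex_of_real)+

lemma two_cos_double_Arg_eq:
  fixes z :: complex and a b :: rat and D :: int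
  assumes "z \<noteq> 0" and "D > 0" and "Re z = of_rat a" and "Im z = of_rat b * sqrt (of_int D)"
  shows "2 * cos (2 * Arg z) = of_rat (2 * (a^2 - of_int D * b^2) / (a^2 + of_int D * b^2))"
proof -
  have "(cmod z)^2 = of_rat (a^2 + of_int D * b^2)"
    using assms(2-4) by (simp add: cmod_power2 power_mult_distrib of_rat_add of_rat_mult of_rat_power)
  with assms show ?thesis unfolding cos_double_Arg[OF assms(1)]
    by (simp add: power_mult_distrib of_rat_diff of_rat_mult of_rat_power of_rat_divide)
qed

lemma squarefree_eq_if_square_relation:
  fixes c D :: int and x y :: rat
  assumes "squarefree c" and "squarefree D" and "of_int c * x ^ 2 = of_int D * y ^ 2" and "x \<noteq> 0"
  shows "D = c"
proof -
  obtain u v where uv: "quotient_of (y / x) = (u, v)" by (cases "quotient_of (y / x)")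
  have "v > 0" "coprime u v" and quotient: "y / x = of_int u / of_int v"
    using uv quotient_of_denom_pos quotient_of_coprime quotient_of_div by blast+
  have "of_int D * (y / x) ^ 2 = of_int c"
    using assms(3,4) by (simp add: field_simps)
  then have "of_int D * (of_int u) ^ 2 = (of_int c * (of_int v) ^ 2 :: rat)"
    using \<open>v > 0\<close> unfolding quotient by (simp add: field_simps power2_eq_square)
  then have eq: "D * u ^ 2 = c * v ^ 2" by (metis of_int_eq_iff of_int_mult of_int_power)
  then have "u ^ 2 dvd c * v ^ 2" by (metis dvd_triv_right)
  with \<open>coprime u v\<close> have "u ^ 2 dvd c" by (simp add: coprime_dvd_mult_left_iff)
  then have "u ^ 2 = 1" using assms(1) squarefreeD by (metis zdvd1_eq power2_abs one_power2)
  with eq have "D = c * v ^ 2" by simp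
  then have "v dvd 1" using assms(2) squarefreeD by (metis dvd_triv_right)
  with \<open>v > 0\<close> \<open>D = c * v ^ 2\<close> show ?thesis by simp
qed

text \<open>The ratio below is \<open>2 cos (2 arg \<alpha>)\<close> for \<open>\<alpha> = a + b\<surd>-D\<close>.\<close>

lemma squarefree_eq_if_ratio_in_Ints:
  fixes D k :: int and a b :: rat
  assumes "squarefree D" and "D > 0" and "a^2 + of_int D * b^2 \<noteq> 0"
    and "2 * (a^2 - of_int D * b^2) / (a^2 + of_int D * b^2) = of_int k" and "\<bar>k\<bar> \<le> 1"
  shows "D = (if k = 0 then 1 else 3)"
proof -
  have rel: "(2 - of_int k) * a^2 = (2 + of_int k) * of_int D * b^2"
    using assms(3,4) by (simp add: field_simps)
  have "a \<noteq> 0"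
  proof
    assume "a = 0"
    with rel assms(2,5) have "b = 0" by auto
    with \<open>a = 0\<close> assms(3) show False by simp
  qed
  show ?thesis
  proof (cases "k = 0")
    case True
    have "D = 1"
    proof (rule squarefree_eq_if_square_relation)
      show "of_int 1 * a^2 = of_int D * b^2" using rel True by simp
    qed (use assms(1) \<open>a \<noteq> 0\<close> in auto)
    with True show ?thesis by simp
  next
    case False
    have "D = 3"
    proof (rule squarefree_eq_if_square_relation)
      show "squarefree (3::int)" by (rule squarefree_prime) simp
      have "k = 1 \<or> k = -1" using assms(5) False by linarith
      with rel show "of_int 3 * a^2 = of_int D * (if k = 1 then 3 * b else b)^2"
        by (auto simp: algebra_simps)
    qed (use assms(1) \<open>a \<noteq> 0\<close> in auto)
    with False show ?thesis by simp
  qed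
qed

lemma quad_field_Re_Im:
  assumes "z \<in> quad_field d"
  obtains a b :: rat where "Re z = of_rat a" and "Im z = of_rat b * sqrt (of_int (- d))"
proof -
  from assms obtain a b :: rat
    where "z = of_rat a + of_rat b * (\<i> * complex_of_real (sqrt (of_int (- d))))"
    unfolding quad_field_def by blast
  then show thesis using that[of a b] by simp
qed

lemma Arg_quad_field_cases:
  assumes "squarefree d" and "d < 0" and "z \<in> quad_field d" and "z \<noteq> 0"
    and "n > 0" and "sin (real n * Arg z) = 0"
  shows "sin (2 * Arg z) = 0 \<or> d = -1 \<and> sin (4 * Arg z) = 0 \<or> d = -3 \<and> sin (6 * Arg z) = 0"
proof -
  define D where "D = - d"
  define \<theta> where "\<theta> = Arg z"
  have "D > 0" using assms(2) by (simp add: D_def)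
  obtain a b :: rat where Re: "Re z = of_rat a" and Im: "Im z = of_rat b * sqrt (of_int D)"
    using quad_field_Re_Im[OF assms(3)] unfolding D_def .
  have rat_cos: "2 * cos (2 * \<theta>) = of_rat (2 * (a^2 - of_int D * b^2) / (a^2 + of_int D * b^2))"
    unfolding \<theta>_def by (rule two_cos_double_Arg_eq[OF assms(4) \<open>D > 0\<close> Re Im])
  moreover have "cos (real n * (2 * \<theta>)) = 1"
    using cos_double_sin[of "real n * \<theta>"] assms(6) by (simp add: \<theta>_def algebra_simps)
  ultimately obtain k :: int where k: "2 * cos (2 * \<theta>) = of_int k" "\<bar>k\<bar> \<le> 2"
    using two_cos_root_of_unity_rational[OF assms(5)] by (metis Rats_of_rat)
  have field: "D = (if k = 0 then 1 else 3)" if "\<bar>k\<bar> \<le> 1"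
  proof (rule squarefree_eq_if_ratio_in_Ints)
    have "(cmod z)^2 = of_rat (a^2 + of_int D * b^2)"
      using \<open>D > 0\<close> Re Im by (simp add: cmod_power2 power_mult_distrib of_rat_add of_rat_mult of_rat_power)
    then show "a^2 + of_int D * b^2 \<noteq> 0" using assms(4) by auto
    show "2 * (a^2 - of_int D * b^2) / (a^2 + of_int D * b^2) = of_int k"
      using rat_cos k(1) by (metis of_rat_eq_iff of_rat_of_int_eq)
  qed (use assms(1) \<open>D > 0\<close> that in \<open>auto simp: D_def\<close>)
  from k show ?thesis
  proof (cases rule: two_cos_in_Ints_cases)
    case 1
    then show ?thesis by (simp add: \<theta>_def)
  next
    case 2
    with field show ?thesis by (simp add: \<theta>_def D_def)
  next
    case 3
    with field show ?thesis by (auto simp: \<theta>_def D_def split: if_splits)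
  qed
qed

lemma quad_field_power_in_Reals_iff:
  assumes "squarefree d" and "d < 0" and "z \<in> quad_field d" and "z \<noteq> 0"
  shows "(\<exists>n::nat. n > 0 \<and> z ^ n \<in> \<real>) \<longleftrightarrow>
    sin (real (if d = -1 then 4 else if d = -3 then 6 else 2 :: nat) * Arg z) = 0"
    (is "_ \<longleftrightarrow> sin (real ?m * Arg z) = 0")
proof
  assume "\<exists>n::nat. n > 0 \<and> z ^ n \<in> \<real>"
  then obtain n :: nat where "n > 0" and "sin (real n * Arg z) = 0"
    using complex_power_in_Reals_iff[OF assms(4)] by blast
  then have "sin (real 2 * Arg z) = 0 \<or> d = -1 \<and> sin (real 4 * Arg z) = 0 \<or> d = -3 \<and> sin (real 6 * Arg z) = 0"
    using Arg_quad_field_cases[OF assms] by simp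
  then show "sin (real ?m * Arg z) = 0"
    using sin_mult_eq_0_dvd[of 2 "Arg z" 4] sin_mult_eq_0_dvd[of 2 "Arg z" 6] by auto
next
  assume "sin (real ?m * Arg z) = 0"
  then have "z ^ ?m \<in> \<real>" using complex_power_in_Reals_iff[OF assms(4)] by blast
  then show "\<exists>n::nat. n > 0 \<and> z ^ n \<in> \<real>" by (intro exI[of _ ?m]) simp
qed

theorem theorem4p1:
  fixes d :: int and z :: complex
  assumes "squarefree d" and "d < 0" and "class_number_one d"
    and "z \<in> ring_of_integers d" and "z \<noteq> 0"
  shows "(\<exists>n::nat. n > 0 \<and> z ^ n \<in> \<real>) \<longleftrightarrow>
    (if d = -1 then (\<exists>k::int. Arg z = of_int k * (pi / 4))
     else if d = -3 then (\<exists>k::int. Arg z = of_int k * (pi / 6))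
     else (\<exists>k::int. Arg z = of_int k * (pi / 2)))"
proof -
  define m :: nat where "m = (if d = -1 then 4 else if d = -3 then 6 else 2)"
  have "z \<in> quad_field d" using assms(4) by (simp add: ring_of_integers_def)
  then have "(\<exists>n::nat. n > 0 \<and> z ^ n \<in> \<real>) \<longleftrightarrow> sin (real m * Arg z) = 0"
    unfolding m_def using quad_field_power_in_Reals_iff assms(1,2,5) by blast
  also have "\<dots> \<longleftrightarrow> (\<exists>k::int. Arg z = of_int k * (pi / real m))"
    by (rule sin_mult_eq_0_iff_multiple) (simp add: m_def)
  finally show ?thesis by (simp add: m_def)
qed

end
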